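(* Let $\kappa>0$, $-1<\sigma\le 0$, $\Delta t>0$, and initial data $a^0<b^0$ and $u^0$ with $V:=\int_{a^0}^{b^0}u^0\,dx>0$. Let $T>0$ satisfy $T<\frac{b^0-a^0}{2(1+\sigma)}$. Let $(a^n,b^n,u^n,\lambda^n)$ be generated by either the first order scheme or the second order scheme described in the context (with arbitrary real values of the one-sided derivative approximations, and assuming the elliptic problems involved admit solutions). Then for every integer $n\ge0$ with $(n+1)\Delta t\le T$: (i) $a^0+\sigma T\le a^{n+1}\le a^0+(1+\sigma)T$ and $b^0-(1+\sigma)T\le b^{n+1}\le b^0-\sigma T$; (ii) $0\le \lambda^{n+1}\le \dfrac{\kappa V+2}{b^0-a^0-2(1+\sigma)T}$; (iii) $\displaystyle\int_{a^{n+1}}^{b^{n+1}}\Big(\sqrt{1+(\partial_x u^{n+1})^2}+\kappa (u^{n+1})^2\Big)dx\le \frac{\kappa V^2+2V}{b^0-a^0-2(1+\sigma)T}+b^0-a^0-2\sigma T$. In particular $\lambda^{n+1}$ and the integral in (iii) are bounded by a constant depending only on $a^0,b^0,T,V,\kappa,\sigma$.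
   Context: Elliptic step: given $a<b$, $(u,\lambda)$ with $u\in C^2((a,b))\cap C^1([a,b])$ is said to solve the quasi-static problem on $(a,b)$ with volume $V$ if $$\partial_x\Big(\frac{\partial_x u}{\sqrt{1+(\partial_x u)^2}}\Big)-\kappa u+\lambda=0 \text{ on }(a,b),\quad u(a)=u(b)=0,\quad \int_a^b u\,dx=V.$$ First order scheme: given $a^n,b^n,u^n$ and real numbers $d_0^n,d_N^n$ (approximations of $\partial_x u^n$ at $a^n$ and $b^n$), set $$\frac{a^{n+1}-a^n}{\Delta t}=\sigma+\frac{1}{\sqrt{1+(d_0^n)^2}},\qquad \frac{b^{n+1}-b^n}{\Delta t}=-\sigma-\frac{1}{\sqrt{1+(d_N^n)^2}},$$ and let $(u^{n+1},\lambda^{n+1})$ solve the quasi-static problem on $(a^{n+1},b^{n+1})$ with volume $V$. Second order scheme: first perform the first order step to get a predictor $(\tilde a^{n+1},\tilde b^{n+1},\tilde u^{n+1})$; with real numbers $\tilde d_0^{n+1},\tilde d_N^{n+1}$ (approximations of $\partial_x\tilde u^{n+1}$ at $\tilde a^{n+1},\tilde b^{n+1}$) set $$\frac{a^{n+1}-a^n}{\Delta t}=\sigma+\frac12\Big(\frac{1}{\sqrt{1+(d_0^n)^2}}+\frac{1}{\sqrt{1+(\tilde d_0^{n+1})^2}}\Big),\quad \frac{b^{n+1}-b^n}{\Delta t}=-\sigma-\frac12\Big(\frac{1}{\sqrt{1+(d_N^n)^2}}+\frac{1}{\sqrt{1+(\tilde d_N^{n+1})^2}}\Big),$$ and let $(u^{n+1},\lambda^{n+1})$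 solve the quasi-static problem on $(a^{n+1},b^{n+1})$ with volume $V$. *)

theory Defs
  imports "HOL-Analysis.Analysis"
begin

definition quasi_static :: "real \<Rightarrow> real \<Rightarrow> real \<Rightarrow> real \<Rightarrow> (real \<Rightarrow> real) \<Rightarrow> real \<Rightarrow> bool" where
  "quasi_static \<kappa> a b V u lam \<longleftrightarrow>
     a < b \<and>
     (\<exists>u' u''.
        (\<forall>x\<in>{a..b}. (u has_real_derivative u' x) (at x within {a..b})) \<and>
        continuous_on {a..b} u' \<and>
        (\<forall>x\<in>{a<..<b}. (u' has_real_derivative u'' x) (at x)) \<and>
        continuous_on {a<..<b} u'' \<and>
        (\<forall>x\<in>{a<..<b}.
           ((\<lambda>y. u' y / sqrt (1 + (u' y)\<^sup>2)) has_real_derivative (\<kappa> * u x - lam)) (at x))) \<and>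
     u a = 0 \<and> u b = 0 \<and>
     integral {a..b} u = V"

definition first_order_step :: "real \<Rightarrow> real \<Rightarrow> real \<Rightarrow> real \<Rightarrow> real \<Rightarrow> real \<Rightarrow> real \<Rightarrow> real \<Rightarrow> bool" where
  "first_order_step \<sigma> dt a b d0 dN a' b' \<longleftrightarrow>
     (a' - a) / dt = \<sigma> + 1 / sqrt (1 + d0\<^sup>2) \<and>
     (b' - b) / dt = - \<sigma> - 1 / sqrt (1 + dN\<^sup>2)"

definition second_order_step :: "real \<Rightarrow> real \<Rightarrow> real \<Rightarrow> real \<Rightarrow> real \<Rightarrow> real \<Rightarrow> real \<Rightarrow> real
      \<Rightarrow> real \<Rightarrow> real \<Rightarrow> real \<Rightarrow> real \<Rightarrow> bool" where
  "second_order_step \<kappa> V \<sigma> dt a b d0 dN dt0 dtN a' b' \<longleftrightarrow>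
     (\<exists>ap bp ut lamt.
        first_order_step \<sigma> dt a b d0 dN ap bp \<and>
        quasi_static \<kappa> ap bp V ut lamt \<and>
        (a' - a) / dt = \<sigma> + (1 / sqrt (1 + d0\<^sup>2) + 1 / sqrt (1 + dt0\<^sup>2)) / 2 \<and>
        (b' - b) / dt = - \<sigma> - (1 / sqrt (1 + dN\<^sup>2) + 1 / sqrt (1 + dtN\<^sup>2)) / 2)"

end

theory Submission
  imports Defs
begin

text \<open>Both front speeds \<open>\<sigma> + c\<close> have \<open>c = 1 / sqrt (1 + d\<^sup>2) \<in> (0, 1]\<close> (for the second order
  scheme an average of two such values), so after time \<open>t \<le> T\<close> the left endpoint has moved
  by between \<open>\<sigma> T\<close> and \<open>(1 + \<sigma>) T\<close>, the right one symmetrically, and the interval keeps length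
  at least \<open>L\<^sub>0 = b\<^sup>0 - a\<^sup>0 - 2 (1 + \<sigma>) T > 0\<close>.
  For the elliptic problem write \<open>g = u' / sqrt (1 + u'\<^sup>2)\<close>, so \<open>g' = \<kappa> u - \<lambda>\<close> and \<open>\<bar>g\<bar> \<le> 1\<close>.
  Integrating gives \<open>\<kappa> V - \<lambda> (b - a) = g b - g a \<le> 2\<close>; testing with \<open>u\<close> and integrating by
  parts gives \<open>\<integral> g u' + \<kappa> u\<^sup>2 = \<lambda> V\<close>, and \<open>sqrt (1 + p\<^sup>2) \<le> p \<cdot> p / sqrt (1 + p\<^sup>2) + 1\<close> turns this
  into the energy bound. Finally \<open>\<lambda> \<ge> 0\<close>: at a positive interior maximum of \<open>u\<close> we have
  \<open>g = 0\<close> and, if \<open>\<lambda> < 0\<close>, \<open>g' > 0\<close>, so \<open>u\<close> would increase beyond its maximum.\<close>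

lemma inverse_sqrt_one_plus_square_bounds:
  fixes d :: real
  shows "0 < 1 / sqrt (1 + d\<^sup>2)" and "1 / sqrt (1 + d\<^sup>2) \<le> 1"
  by (simp_all add: add_pos_nonneg)

lemma displacement_bounds_of_speed:
  fixes x dt \<sigma> c :: real
  assumes "0 < dt" "0 \<le> c" "c \<le> 1" "x / dt = \<sigma> + c"
  shows "\<sigma> * dt \<le> x \<and> x \<le> (1 + \<sigma>) * dt"
proof -
  have "x = (\<sigma> + c) * dt" using assms(1,4) by (simp add: field_simps)
  then show ?thesis using assms(1-3) by (simp add: algebra_simps)
qed

lemma first_order_step_displacements:
  assumes "first_order_step \<sigma> dt a b d0 dN a' b'" "0 < dt"
  shows "\<sigma> * dt \<le> a' - a \<and> a' - a \<le> (1 + \<sigma>) * dt \<and> \<sigma> * dt \<le> b - b' \<and> b - b' \<le> (1 + \<sigma>) * dt"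
proof -
  have "(a' - a) / dt = \<sigma> + 1 / sqrt (1 + d0\<^sup>2)" "(b - b') / dt = \<sigma> + 1 / sqrt (1 + dN\<^sup>2)"
    using assms unfolding first_order_step_def by (auto simp: field_simps)
  then show ?thesis
    using displacement_bounds_of_speed[OF assms(2)] inverse_sqrt_one_plus_square_bounds
    by (meson less_imp_le)
qed

lemma second_order_step_displacements:
  assumes "second_order_step \<kappa> V \<sigma> dt a b d0 dN dt0 dtN a' b'" "0 < dt"
  shows "\<sigma> * dt \<le> a' - a \<and> a' - a \<le> (1 + \<sigma>) * dt \<and> \<sigma> * dt \<le> b - b' \<and> b - b' \<le> (1 + \<sigma>) * dt"
proof -
  have "(a' - a) / dt = \<sigma> + (1 / sqrt (1 + d0\<^sup>2) + 1 / sqrt (1 + dt0\<^sup>2)) / 2"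
       "(b - b') / dt = \<sigma> + (1 / sqrt (1 + dN\<^sup>2) + 1 / sqrt (1 + dtN\<^sup>2)) / 2"
    using assms unfolding second_order_step_def by (auto simp: field_simps)
  moreover have "0 \<le> (c + c') / 2 \<and> (c + c') / 2 \<le> 1"
    if "0 < c" "c \<le> 1" "0 < c'" "c' \<le> 1" for c c' :: real
    using that by auto
  ultimately show ?thesis
    using displacement_bounds_of_speed[OF assms(2)] inverse_sqrt_one_plus_square_bounds by meson
qed

lemma sum_of_increments_bounds:
  fixes x :: "nat \<Rightarrow> real"
  assumes "\<And>k. k < m \<Longrightarrow> l \<le> x (Suc k) - x k \<and> x (Suc k) - x k \<le> h"
  shows "real m * l \<le> x m - x 0 \<and> x m - x 0 \<le> real m * h"
  using assms
proof (induction m)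
  case (Suc m)
  then have "real m * l \<le> x m - x 0 \<and> x m - x 0 \<le> real m * h"
    and "l \<le> x (Suc m) - x m \<and> x (Suc m) - x m \<le> h" by simp_all
  then show ?case by (simp add: algebra_simps)
qed simp

lemma displacement_bounds_up_to_time:
  fixes x :: "nat \<Rightarrow> real"
  assumes "\<sigma> \<le> 0" "0 \<le> 1 + \<sigma>" "0 < dt" "real m * dt \<le> T"
    and "\<And>k. k < m \<Longrightarrow> \<sigma> * dt \<le> x (Suc k) - x k \<and> x (Suc k) - x k \<le> (1 + \<sigma>) * dt"
  shows "\<sigma> * T \<le> x m - x 0 \<and> x m - x 0 \<le> (1 + \<sigma>) * T"
proof -
  have "\<sigma> * T \<le> \<sigma> * (real m * dt)" "(1 + \<sigma>) * (real m * dt) \<le> (1 + \<sigma>) * T"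
    using assms(1,2,4) by (simp_all add: mult_left_mono mult_left_mono_neg)
  then show ?thesis
    using sum_of_increments_bounds[of m "\<sigma> * dt" x "(1 + \<sigma>) * dt"] assms(5)
    by (simp add: mult.left_commute)
qed

lemma abs_div_sqrt_one_plus_square_le_1:
  fixes p :: real
  shows "\<bar>p / sqrt (1 + p\<^sup>2)\<bar> \<le> 1"
proof -
  have "\<bar>p\<bar> \<le> sqrt (1 + p\<^sup>2)" by (metis real_sqrt_abs real_sqrt_le_mono le_add_same_cancel2 zero_le_one)
  then show ?thesis by (simp add: add_pos_nonneg)
qed

lemma div_sqrt_one_plus_square_pos_iff:
  fixes p :: real
  shows "0 < p / sqrt (1 + p\<^sup>2) \<longleftrightarrow> 0 < p"
proof -
  have "0 < sqrt (1 + p\<^sup>2)" by (simp add: add_pos_nonneg)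
  from pos_less_divide_eq[OF this, of 0 p] show ?thesis by simp
qed

lemma sqrt_one_plus_square_le:
  fixes p :: real
  shows "sqrt (1 + p\<^sup>2) \<le> p * (p / sqrt (1 + p\<^sup>2)) + 1"
proof -
  define s where "s = sqrt (1 + p\<^sup>2)"
  have "1 \<le> s" and "s * s = 1 + p\<^sup>2" unfolding s_def by (simp_all add: add_pos_nonneg)
  then have "s = p * (p / s) + 1 / s" by (simp add: field_simps power2_eq_square)
  also have "\<dots> \<le> p * (p / s) + 1" using \<open>1 \<le> s\<close> by simp
  finally show ?thesis unfolding s_def .
qed

lemma continuous_on_div_sqrt_one_plus_square:
  fixes f :: "'a::topological_space \<Rightarrow> real"
  assumes "continuous_on S f"
  shows "continuous_on S (\<lambda>y. f y / sqrt (1 + (f y)\<^sup>2))"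
proof -
  have "sqrt (1 + (f y)\<^sup>2) \<noteq> 0" for y by (smt (verit) real_sqrt_eq_zero_cancel_iff zero_le_power2)
  with assms show ?thesis by (intro continuous_intros) auto
qed

lemma quasi_staticE:
  assumes "quasi_static \<kappa> a b V u lam"
  obtains u' where "a < b" "continuous_on {a..b} u" "continuous_on {a..b} u'"
    "\<And>x. x \<in> {a<..<b} \<Longrightarrow> (u has_real_derivative u' x) (at x)"
    "\<And>x. x \<in> {a<..<b} \<Longrightarrow>
       ((\<lambda>y. u' y / sqrt (1 + (u' y)\<^sup>2)) has_real_derivative \<kappa> * u x - lam) (at x)"
    "u a = 0" "u b = 0" "(u has_integral V) {a..b}"
proof -
  from assms obtain u' where ab: "a < b"
    and du: "\<And>x. x \<in> {a..b} \<Longrightarrow> (u has_real_derivative u' x) (at x within {a..b})"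
    and "continuous_on {a..b} u'"
    and "\<And>x. x \<in> {a<..<b} \<Longrightarrow>
           ((\<lambda>y. u' y / sqrt (1 + (u' y)\<^sup>2)) has_real_derivative \<kappa> * u x - lam) (at x)"
    and "u a = 0" "u b = 0" "integral {a..b} u = V"
    unfolding quasi_static_def by blast
  moreover have cu: "continuous_on {a..b} u"
    unfolding continuous_on_eq_continuous_within using du DERIV_continuous by blast
  moreover have "(u has_real_derivative u' x) (at x)" if "x \<in> {a<..<b}" for x
    using du[of x] that at_within_interior[of x "{a..b}"] by simp
  moreover have "(u has_integral V) {a..b}"
    using integrable_continuous_interval[OF cu] \<open>integral {a..b} u = V\<close> by blast
  ultimately show thesis using that by blast
qed

lemma positive_interior_maximum:
  fixes u :: "real \<Rightarrow> real"
  assumes "a < b" "continuous_on {a..b} u" "u a = 0" "u b = 0" "(u has_integral V) {a..b}" "0 < V"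
  obtains x0 where "x0 \<in> {a<..<b}" "0 < u x0" "\<And>y. y \<in> {a..b} \<Longrightarrow> u y \<le> u x0"
proof -
  obtain x0 where x0: "x0 \<in> {a..b}" and max: "\<And>y. y \<in> {a..b} \<Longrightarrow> u y \<le> u x0"
    using continuous_attains_sup[OF compact_Icc _ assms(2)] assms(1) by auto
  have "0 < u x0"
  proof (rule ccontr)
    assume "\<not> 0 < u x0"
    then have "\<And>y. y \<in> {a..b} \<Longrightarrow> u y \<le> 0" using max by force
    then have "V \<le> 0" using has_integral_le[OF assms(5) has_integral_0] by force
    with assms(6) show False by simp
  qed
  moreover have "x0 \<in> {a<..<b}" using x0 \<open>0 < u x0\<close> assms(3,4) by (cases "x0 = a \<or> x0 = b") auto
  ultimately show thesis using that max by blast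
qed

lemma quasi_static_multiplier_nonneg:
  assumes "quasi_static \<kappa> a b V u lam" "0 < \<kappa>" "0 < V"
  shows "0 \<le> lam"
proof (rule ccontr)
  assume "\<not> 0 \<le> lam"
  obtain u' where ab: "a < b" and cu: "continuous_on {a..b} u" and "continuous_on {a..b} u'"
    and du: "\<And>x. x \<in> {a<..<b} \<Longrightarrow> (u has_real_derivative u' x) (at x)"
    and dg: "\<And>x. x \<in> {a<..<b} \<Longrightarrow>
       ((\<lambda>y. u' y / sqrt (1 + (u' y)\<^sup>2)) has_real_derivative \<kappa> * u x - lam) (at x)"
    and ua: "u a = 0" and ub: "u b = 0" and iu: "(u has_integral V) {a..b}"
    by (elim quasi_staticE[OF assms(1)])
  obtain x0 where x0: "x0 \<in> {a<..<b}" "0 < u x0" and max: "\<And>y. y \<in> {a..b} \<Longrightarrow> u y \<le> u x0"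
    using positive_interior_maximum[OF ab cu ua ub iu assms(3)] by blast
  define g where "g y = u' y / sqrt (1 + (u' y)\<^sup>2)" for y
  have "u' x0 = 0"
  proof (rule DERIV_local_max[OF du[OF x0(1)]])
    show "0 < min (x0 - a) (b - x0)" using x0(1) by simp
    show "\<forall>y. \<bar>x0 - y\<bar> < min (x0 - a) (b - x0) \<longrightarrow> u y \<le> u x0"
      using max by (auto simp: abs_if split: if_splits)
  qed
  then have "g x0 = 0" unfolding g_def by simp
  have "0 < \<kappa> * u x0 - lam" using \<open>\<not> 0 \<le> lam\<close> mult_pos_pos[OF assms(2) x0(2)] by linarith
  then obtain d where "0 < d" and g_inc: "\<And>h. 0 < h \<Longrightarrow> h < d \<Longrightarrow> g x0 < g (x0 + h)"
    using DERIV_pos_inc_right[OF dg[OF x0(1), folded g_def]] by blast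
  define y where "y = x0 + min d (b - x0) / 2"
  have y: "x0 < y" "y < b" "y - x0 < d"
    using \<open>0 < d\<close> x0(1) unfolding y_def by (auto simp: min_def field_simps)
  have "(u has_real_derivative u' t) (at t)" if "x0 \<le> t" "t \<le> y" for t
    using du x0(1) y that by simp
  then obtain z where z: "x0 < z" "z < y" "u y - u x0 = (y - x0) * u' z"
    using MVT2[OF y(1)] by blast
  have "0 < g z" using g_inc[of "z - x0"] \<open>g x0 = 0\<close> z y by simp
  then have "0 < u' z" unfolding g_def div_sqrt_one_plus_square_pos_iff .
  then have "0 < (y - x0) * u' z" using z by simp
  then have "u x0 < u y" using z(3) by simp
  moreover have "u y \<le> u x0" using max y x0(1) by simp
  ultimately show False by simp
qed

lemma quasi_static_multiplier_length_bound:
  assumes "quasi_static \<kappa> a b V u lam"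
  shows "lam * (b - a) \<le> \<kappa> * V + 2"
proof -
  obtain u' where ab: "a < b" and "continuous_on {a..b} u" and cu': "continuous_on {a..b} u'"
    and "\<And>x. x \<in> {a<..<b} \<Longrightarrow> (u has_real_derivative u' x) (at x)"
    and dg: "\<And>x. x \<in> {a<..<b} \<Longrightarrow>
       ((\<lambda>y. u' y / sqrt (1 + (u' y)\<^sup>2)) has_real_derivative \<kappa> * u x - lam) (at x)"
    and "u a = 0" "u b = 0" and iu: "(u has_integral V) {a..b}"
    by (elim quasi_staticE[OF assms])
  define g where "g y = u' y / sqrt (1 + (u' y)\<^sup>2)" for y
  have "continuous_on {a..b} g"
    unfolding g_def using cu' by (rule continuous_on_div_sqrt_one_plus_square)
  then have "((\<lambda>x. \<kappa> * u x - lam) has_integral (g b - g a)) {a..b}"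
    using ab dg unfolding g_def
    by (intro fundamental_theorem_of_calculus_interior)
       (auto simp: has_real_derivative_iff_has_vector_derivative[symmetric])
  moreover have "((\<lambda>x. \<kappa> * u x - lam) has_integral (\<kappa> * V - lam * (b - a))) {a..b}"
    using has_integral_diff[OF has_integral_mult_right[OF iu, of \<kappa>] has_integral_const_real[of lam a b]] ab
    by (simp add: mult.commute)
  ultimately have "g b - g a = \<kappa> * V - lam * (b - a)" by (rule has_integral_unique)
  then show ?thesis
    using abs_div_sqrt_one_plus_square_le_1[of "u' a"] abs_div_sqrt_one_plus_square_le_1[of "u' b"]
    unfolding g_def by linarith
qed

lemma quasi_static_energy_bound:
  assumes "quasi_static \<kappa> a b V u lam"
  shows "integral {a..b} (\<lambda>x. sqrt (1 + (deriv u x)\<^sup>2) + \<kappa> * (u x)\<^sup>2) \<le> lam * V + (b - a)"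
proof -
  obtain u' where ab: "a < b" and cu: "continuous_on {a..b} u" and cu': "continuous_on {a..b} u'"
    and du: "\<And>x. x \<in> {a<..<b} \<Longrightarrow> (u has_real_derivative u' x) (at x)"
    and dg: "\<And>x. x \<in> {a<..<b} \<Longrightarrow>
       ((\<lambda>y. u' y / sqrt (1 + (u' y)\<^sup>2)) has_real_derivative \<kappa> * u x - lam) (at x)"
    and ua: "u a = 0" and ub: "u b = 0" and iu: "(u has_integral V) {a..b}"
    by (elim quasi_staticE[OF assms])
  define g where "g y = u' y / sqrt (1 + (u' y)\<^sup>2)" for y
  define H where "H x = (\<kappa> * u x - lam) * u x + g x * u' x" for x
  define F where "F x = sqrt (1 + (u' x)\<^sup>2) + \<kappa> * (u x)\<^sup>2" for x
  have "continuous_on {a..b} (\<lambda>y. g y * u y)"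
    unfolding g_def using continuous_on_div_sqrt_one_plus_square[OF cu'] cu
    by (rule continuous_on_mult)
  moreover have "((\<lambda>y. g y * u y) has_real_derivative H x) (at x)" if "x \<in> {a<..<b}" for x
    using DERIV_mult[OF dg[OF that, folded g_def] du[OF that]] unfolding H_def
    by (simp add: mult.commute)
  \<comment> \<open>integration by parts against the test function \<open>u\<close>, which vanishes at both ends\<close>
  ultimately have H: "(H has_integral 0) {a..b}"
    using fundamental_theorem_of_calculus_interior[of a b "\<lambda>y. g y * u y" H] ab ua ub
    by (auto simp: has_real_derivative_iff_has_vector_derivative[symmetric])
  have "((\<lambda>x. H x + lam * u x + 1) has_integral (lam * V + (b - a))) {a..b}"
    using has_integral_add[OF has_integral_add[OF H has_integral_mult_right[OF iu, of lam]]
        has_integral_const_real[of 1 a b]] ab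
    by (simp add: mult.commute)
  moreover have "F x \<le> H x + lam * u x + 1" for x
    using sqrt_one_plus_square_le[of "u' x"]
    unfolding F_def H_def g_def by (simp add: algebra_simps power2_eq_square)
  moreover have "continuous_on {a..b} F" unfolding F_def using cu cu' by (intro continuous_intros)
  then have "(F has_integral integral {a..b} F) {a..b}"
    using integrable_continuous_interval by blast
  ultimately have "integral {a..b} F \<le> lam * V + (b - a)" using has_integral_le by blast
  moreover have "integral {a..b} (\<lambda>x. sqrt (1 + (deriv u x)\<^sup>2) + \<kappa> * (u x)\<^sup>2) = integral {a..b} F"
  proof (rule integral_spike[of "{a, b}"])
    fix x assume "x \<in> {a..b} - {a, b}"
    then have "deriv u x = u' x" using du[of x] DERIV_imp_deriv by auto
    then show "F x = sqrt (1 + (deriv u x)\<^sup>2) + \<kappa> * (u x)\<^sup>2" unfolding F_def by simp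
  qed simp
  ultimately show ?thesis by simp
qed

theorem proposition3p1:
  fixes \<kappa> \<sigma> \<Delta>t T V :: real
    and a b :: "nat \<Rightarrow> real" and u :: "nat \<Rightarrow> real \<Rightarrow> real" and lam :: "nat \<Rightarrow> real"
    and d0 dN dt0 dtN :: "nat \<Rightarrow> real"
  assumes "\<kappa> > 0" and "-1 < \<sigma>" and "\<sigma> \<le> 0" and "\<Delta>t > 0"
    and "a 0 < b 0"
    and "V = integral {a 0..b 0} (u 0)" and "V > 0"
    and "T > 0" and "T < (b 0 - a 0) / (2 * (1 + \<sigma>))"
    and scheme:
      "(\<forall>k. real (Suc k) * \<Delta>t \<le> T \<longrightarrow>
              first_order_step \<sigma> \<Delta>t (a k) (b k) (d0 k) (dN k) (a (Suc k)) (b (Suc k)))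
     \<or> (\<forall>k. real (Suc k) * \<Delta>t \<le> T \<longrightarrow>
              second_order_step \<kappa> V \<sigma> \<Delta>t (a k) (b k) (d0 k) (dN k) (dt0 (Suc k)) (dtN (Suc k))
                (a (Suc k)) (b (Suc k)))"
    and elliptic:
      "\<forall>k. real (Suc k) * \<Delta>t \<le> T \<longrightarrow>
              quasi_static \<kappa> (a (Suc k)) (b (Suc k)) V (u (Suc k)) (lam (Suc k))"
    and "real (Suc n) * \<Delta>t \<le> T"
  shows "a 0 + \<sigma> * T \<le> a (Suc n) \<and> a (Suc n) \<le> a 0 + (1 + \<sigma>) * T \<and>
         b 0 - (1 + \<sigma>) * T \<le> b (Suc n) \<and> b (Suc n) \<le> b 0 - \<sigma> * T \<and>
         0 \<le> lam (Suc n) \<and>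
         lam (Suc n) \<le> (\<kappa> * V + 2) / (b 0 - a 0 - 2 * (1 + \<sigma>) * T) \<and>
         integral {a (Suc n)..b (Suc n)}
           (\<lambda>x. sqrt (1 + (deriv (u (Suc n)) x)\<^sup>2) + \<kappa> * (u (Suc n) x)\<^sup>2)
         \<le> (\<kappa> * V\<^sup>2 + 2 * V) / (b 0 - a 0 - 2 * (1 + \<sigma>) * T) + b 0 - a 0 - 2 * \<sigma> * T"
proof -
  have step: "\<sigma> * \<Delta>t \<le> a (Suc k) - a k \<and> a (Suc k) - a k \<le> (1 + \<sigma>) * \<Delta>t \<and>
      \<sigma> * \<Delta>t \<le> b k - b (Suc k) \<and> b k - b (Suc k) \<le> (1 + \<sigma>) * \<Delta>t" if "k < Suc n" for k
  proof -
    have "real (Suc k) * \<Delta>t \<le> real (Suc n) * \<Delta>t" using that assms(4) by simp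
    then have "real (Suc k) * \<Delta>t \<le> T" using assms(12) by linarith
    then consider
        "first_order_step \<sigma> \<Delta>t (a k) (b k) (d0 k) (dN k) (a (Suc k)) (b (Suc k))"
      | "second_order_step \<kappa> V \<sigma> \<Delta>t (a k) (b k) (d0 k) (dN k) (dt0 (Suc k)) (dtN (Suc k))
           (a (Suc k)) (b (Suc k))"
      using scheme by blast
    then show ?thesis
      using first_order_step_displacements second_order_step_displacements assms(4) by cases blast+
  qed
  have a_bounds: "\<sigma> * T \<le> a (Suc n) - a 0 \<and> a (Suc n) - a 0 \<le> (1 + \<sigma>) * T"
    using displacement_bounds_up_to_time[of \<sigma> \<Delta>t "Suc n" T a] step assms(2-4,12) by simp
  have b_bounds: "\<sigma> * T \<le> b 0 - b (Suc n) \<and> b 0 - b (Suc n) \<le> (1 + \<sigma>) * T"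
    using displacement_bounds_up_to_time[of \<sigma> \<Delta>t "Suc n" T "\<lambda>k. - b k"] step assms(2-4,12) by simp
  define L0 where "L0 = b 0 - a 0 - 2 * (1 + \<sigma>) * T"
  have "0 < L0" using assms(2,9) unfolding L0_def by (simp add: pos_less_divide_eq algebra_simps)
  have length_bounds: "L0 \<le> b (Suc n) - a (Suc n)" "b (Suc n) - a (Suc n) \<le> b 0 - a 0 - 2 * \<sigma> * T"
    using a_bounds b_bounds unfolding L0_def by (simp_all add: algebra_simps)
  have qs: "quasi_static \<kappa> (a (Suc n)) (b (Suc n)) V (u (Suc n)) (lam (Suc n))"
    using elliptic assms(12) by blast
  then have lam_nonneg: "0 \<le> lam (Suc n)" using quasi_static_multiplier_nonneg assms(1,7) by blast
  then have "lam (Suc n) * L0 \<le> \<kappa> * V + 2"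
    using quasi_static_multiplier_length_bound[OF qs] mult_left_mono[OF length_bounds(1)] by force
  then have lam_bound: "lam (Suc n) \<le> (\<kappa> * V + 2) / L0"
    using \<open>0 < L0\<close> by (simp add: pos_le_divide_eq)
  then have "lam (Suc n) * V \<le> (\<kappa> * V\<^sup>2 + 2 * V) / L0"
    using mult_right_mono[OF lam_bound] assms(7) by (simp add: field_simps power2_eq_square)
  then show ?thesis
    using quasi_static_energy_bound[OF qs] a_bounds b_bounds lam_nonneg lam_bound length_bounds(2)
    unfolding L0_def by (simp add: algebra_simps)
qed

end
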